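(* Let $c^{(k)}=(u^{(k)},n_1^{(k)},n_2^{(k)})$ and $c=(u,n_1,n_2)$ be admissible controls on $[0,T]$, let $\rho^{(k)},\rho$ be the solutions of the master equation (GKSL) with controls $c^{(k)}$, $c$ respectively, and let $\chi^{(k)},\chi$ be the solutions of the adjoint system with controls $c^{(k)}$, $c$ respectively. Then the following exact identities hold: $$J_1(c)-J_1(c^{(k)})=\int_0^T\big\langle \mathcal K^c(\chi^{(k)}(t),\rho(t)),\,c(t)-c^{(k)}(t)\big\rangle_{\mathbb R^3}\,dt,$$ $$J_1(c)-J_1(c^{(k)})=\int_0^T\big\langle \mathcal K^c(\chi(t),\rho^{(k)}(t)),\,c(t)-c^{(k)}(t)\big\rangle_{\mathbb R^3}\,dt .$$
   Context: Let $\sigma_x,\sigma_y,\sigma_z$ be the Pauli matrices, $\mathbb I_2,\mathbb I_4$ identity matrices, $\sigma^+=\begin{pmatrix}0&0\\1&0\end{pmatrix}$, $\sigma^-=\begin{pmatrix}0&1\\0&0\end{pmatrix}$, $\sigma_1^\pm=\sigma^\pm\otimes\mathbb I_2$, $\sigma_2^\pm=\mathbb I_2\otimes\sigma^\pm$, $W_1=\sigma_z\otimes\mathbb I_2$, $W_2=\mathbb I_2\otimes\sigma_z$. Fix parameters $\varepsilon,\omega_j,\Lambda_j,\Omega_j>0$ ($j=1,2$), $H_0=\frac{\omega_1}{2}W_1+\frac{\omega_2}{2}W_2$, and a Hermitian $4\times4$ matrix $V$ (in the paper $V=Q_1\otimes\mathbb I_2+\mathbb I_2\otimes Q_2$ or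 $V=Q_1\otimes Q_2$ with $Q_j=\sin\theta_j\cos\varphi_j\sigma_x+\sin\theta_j\sin\varphi_j\sigma_y+\cos\theta_j\sigma_z$). For $c=(u,n_1,n_2)\in\mathbb R^3$ let $H_c=H_0+\varepsilon\sum_{j=1}^2\Lambda_j n_jW_j+uV$ and $$\mathcal L^D_n(\rho)=\sum_{j=1}^2\Big[\Omega_j(n_j+1)\big(2\sigma_j^-\rho\sigma_j^+-\{\sigma_j^+\sigma_j^-,\rho\}\big)+\Omega_jn_j\big(2\sigma_j^+\rho\sigma_j^--\{\sigma_j^-\sigma_j^+,\rho\}\big)\Big],$$ $$\mathcal L^{D,\dagger}_n(\chi)=\sum_{j=1}^2\Big[\Omega_j(n_j+1)\big(2\sigma_j^+\chi\sigma_j^--\{\sigma_j^+\sigma_j^-,\chi\}\big)+\Omega_jn_j\big(2\sigma_j^-\chi\sigma_j^+-\{\sigma_j^-\sigma_j^+,\chi\}\big)\Big],$$ where $\{A,B\}=AB+BA$, $[A,B]=AB-BA$. Fix $T>0$, $\mu,n_{\max}>0$, $Q=[-\mu,\mu]\times[0,n_{\max}]^2$; admissible controls are piecewise continuous $c=(u,n_1,n_2):[0,T]\to Q$. Fix density matrices $\rho_0,\rho_{\rm target}$ ($4\times 4$, positive semidefinite, trace one). The master equation is $\dot\rho(t)=-i[H_{c(t)},\rho(t)]+\varepsilon\mathcal L^D_{n(t)}(\rho(t))$, $\rho(0)=\rho_0$; the adjoint system is $\dot\chi(t)=-i[H_{c(t)},\chi(t)]-\varepsilon\mathcal L^{D,\dagger}_{n(t)}(\chi(t))$,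 $\chi(T)=\rho_{\rm target}$ (solved backward). For matrices, $\langle A,B\rangle={\rm Tr}(A^\dagger B)$. The objective is $J_1(c)={\rm Tr}(\rho(T)\rho_{\rm target})$ where $\rho$ solves the master equation with control $c$. The switching functions $\mathcal K^c=(\mathcal K^u,\mathcal K^{n_1},\mathcal K^{n_2})$ are the coefficients of $u,n_1,n_2$ in $\langle\chi,-i[H_c,\rho]+\varepsilon\mathcal L^D_n(\rho)\rangle$: $\mathcal K^u(\chi,\rho)=\langle\chi,-i[V,\rho]\rangle$, $\mathcal K^{n_j}(\chi,\rho)=\big\langle\chi,-i\varepsilon\Lambda_j[W_j,\rho]+\varepsilon\Omega_j\big(2\sigma_j^-\rho\sigma_j^++2\sigma_j^+\rho\sigma_j^--2\rho\big)\big\rangle$, $j=1,2$ (real for Hermitian $\chi,\rho$). *)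

theory Defs
  imports "HOL-Analysis.Analysis"
begin

text \<open>4x4 (and 2x2) complex matrices are modelled as complex^n^n.
  Index convention for the Kronecker product: basis index 0,1,2,3 of C^4 corresponds to
  pairs (0,0),(0,1),(1,0),(1,1) of C^2 (x) C^2.\<close>

type_synonym mat2 = "complex^2^2"
type_synonym mat4 = "complex^4^4"

definition kron_hi :: "4 \<Rightarrow> 2" where
  "kron_hi i = (if i = 0 \<or> i = 1 then 0 else 1)"
definition kron_lo :: "4 \<Rightarrow> 2" where
  "kron_lo i = (if i = 0 \<or> i = 2 then 0 else 1)"

definition kron :: "mat2 \<Rightarrow> mat2 \<Rightarrow> mat4" where
  "kron A B = (\<chi> i j. A $ kron_hi i $ kron_hi j * B $ kron_lo i $ kron_lo j)"

definition id2 :: mat2 where "id2 = mat 1"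
definition sigma_z :: mat2 where
  "sigma_z = (\<chi> i j. if i = j then (if i = 0 then 1 else -1) else 0)"
definition sigma_plus :: mat2 where
  "sigma_plus = (\<chi> i j. if i = 1 \<and> j = 0 then 1 else 0)"
definition sigma_minus :: mat2 where
  "sigma_minus = (\<chi> i j. if i = 0 \<and> j = 1 then 1 else 0)"

definition sp1 :: mat4 where "sp1 = kron sigma_plus id2"
definition sm1 :: mat4 where "sm1 = kron sigma_minus id2"
definition sp2 :: mat4 where "sp2 = kron id2 sigma_plus"
definition sm2 :: mat4 where "sm2 = kron id2 sigma_minus"
definition W1 :: mat4 where "W1 = kron sigma_z id2"
definition W2 :: mat4 where "W2 = kron id2 sigma_z"

definition cscale :: "complex \<Rightarrow> mat4 \<Rightarrow> mat4" where
  "cscale c A = (\<chi> i j. c * A $ i $ j)"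

definition adjoint_mat :: "mat4 \<Rightarrow> mat4" where
  "adjoint_mat A = (\<chi> i j. cnj (A $ j $ i))"

definition mtrace :: "mat4 \<Rightarrow> complex" where
  "mtrace A = (\<Sum>i\<in>UNIV. A $ i $ i)"

definition hs_inner :: "mat4 \<Rightarrow> mat4 \<Rightarrow> complex" where
  "hs_inner A B = mtrace (adjoint_mat A ** B)"

definition hermitian4 :: "mat4 \<Rightarrow> bool" where
  "hermitian4 A \<longleftrightarrow> adjoint_mat A = A"

definition psd4 :: "mat4 \<Rightarrow> bool" where
  "psd4 A \<longleftrightarrow> (\<forall>x::complex^4. let q = (\<Sum>i\<in>UNIV. cnj (x $ i) * (A *v x) $ i)
                                    in Im q = 0 \<and> Re q \<ge> 0)"

definition density4 :: "mat4 \<Rightarrow> bool" where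
  "density4 A \<longleftrightarrow> hermitian4 A \<and> psd4 A \<and> mtrace A = 1"

definition comm :: "mat4 \<Rightarrow> mat4 \<Rightarrow> mat4" where
  "comm A B = A ** B - B ** A"
definition acomm :: "mat4 \<Rightarrow> mat4 \<Rightarrow> mat4" where
  "acomm A B = A ** B + B ** A"

definition Ham :: "real \<Rightarrow> real \<Rightarrow> real \<Rightarrow> real \<Rightarrow> real \<Rightarrow> mat4
                   \<Rightarrow> real \<Rightarrow> real \<Rightarrow> real \<Rightarrow> mat4" where
  "Ham eps w1 w2 L1 L2 V u n1 n2 =
     (w1/2) *\<^sub>R W1 + (w2/2) *\<^sub>R W2
     + (eps * L1 * n1) *\<^sub>R W1 + (eps * L2 * n2) *\<^sub>R W2 + u *\<^sub>R V"

definition LD :: "real \<Rightarrow> real \<Rightarrow> real \<Rightarrow> real \<Rightarrow> mat4 \<Rightarrow> mat4" where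
  "LD O1 O2 n1 n2 r =
     (O1 * (n1 + 1)) *\<^sub>R (2 *\<^sub>R (sm1 ** r ** sp1) - acomm (sp1 ** sm1) r)
   + (O1 * n1) *\<^sub>R (2 *\<^sub>R (sp1 ** r ** sm1) - acomm (sm1 ** sp1) r)
   + (O2 * (n2 + 1)) *\<^sub>R (2 *\<^sub>R (sm2 ** r ** sp2) - acomm (sp2 ** sm2) r)
   + (O2 * n2) *\<^sub>R (2 *\<^sub>R (sp2 ** r ** sm2) - acomm (sm2 ** sp2) r)"

definition LD_adj :: "real \<Rightarrow> real \<Rightarrow> real \<Rightarrow> real \<Rightarrow> mat4 \<Rightarrow> mat4" where
  "LD_adj O1 O2 n1 n2 x =
     (O1 * (n1 + 1)) *\<^sub>R (2 *\<^sub>R (sp1 ** x ** sm1) - acomm (sp1 ** sm1) x)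
   + (O1 * n1) *\<^sub>R (2 *\<^sub>R (sm1 ** x ** sp1) - acomm (sm1 ** sp1) x)
   + (O2 * (n2 + 1)) *\<^sub>R (2 *\<^sub>R (sp2 ** x ** sm2) - acomm (sp2 ** sm2) x)
   + (O2 * n2) *\<^sub>R (2 *\<^sub>R (sm2 ** x ** sp2) - acomm (sm2 ** sp2) x)"

definition master_rhs where
  "master_rhs eps w1 w2 L1 L2 O1 O2 V u n1 n2 r =
     cscale (-\<i>) (comm (Ham eps w1 w2 L1 L2 V u n1 n2) r) + eps *\<^sub>R LD O1 O2 n1 n2 r"

definition adjoint_rhs where
  "adjoint_rhs eps w1 w2 L1 L2 O1 O2 V u n1 n2 x =
     cscale (-\<i>) (comm (Ham eps w1 w2 L1 L2 V u n1 n2) x) - eps *\<^sub>R LD_adj O1 O2 n1 n2 x"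

definition piecewise_continuous_on ::
  "real \<Rightarrow> (real \<Rightarrow> 'a::topological_space) \<Rightarrow> bool" where
  "piecewise_continuous_on T f \<longleftrightarrow>
     (\<exists>S. finite S \<and> S \<subseteq> {0..T} \<and> continuous_on ({0..T} - S) f \<and>
          (\<forall>s\<in>S. (s > 0 \<longrightarrow> (\<exists>l. (f \<longlongrightarrow> l) (at_left s))) \<and>
                  (s < T \<longrightarrow> (\<exists>l. (f \<longlongrightarrow> l) (at_right s)))))"

definition admissible ::
  "real \<Rightarrow> real \<Rightarrow> real \<Rightarrow> (real \<Rightarrow> real) \<Rightarrow> (real \<Rightarrow> real) \<Rightarrow> (real \<Rightarrow> real) \<Rightarrow> bool" where
  "admissible T mu nmax u n1 n2 \<longleftrightarrow>
     piecewise_continuous_on T (\<lambda>t. (u t, n1 t, n2 t)) \<and>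
     (\<forall>t\<in>{0..T}. u t \<in> {-mu..mu} \<and> n1 t \<in> {0..nmax} \<and> n2 t \<in> {0..nmax})"

definition master_solution where
  "master_solution eps w1 w2 L1 L2 O1 O2 V T u n1 n2 r0 r \<longleftrightarrow>
     continuous_on {0..T} r \<and> r 0 = r0 \<and>
     (\<exists>S. finite S \<and> (\<forall>t\<in>{0..T} - S.
        (r has_vector_derivative
           master_rhs eps w1 w2 L1 L2 O1 O2 V (u t) (n1 t) (n2 t) (r t)) (at t within {0..T})))"

definition adjoint_solution where
  "adjoint_solution eps w1 w2 L1 L2 O1 O2 V T u n1 n2 rtarget x \<longleftrightarrow>
     continuous_on {0..T} x \<and> x T = rtarget \<and>
     (\<exists>S. finite S \<and> (\<forall>t\<in>{0..T} - S.
        (x has_vector_derivative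
           adjoint_rhs eps w1 w2 L1 L2 O1 O2 V (u t) (n1 t) (n2 t) (x t)) (at t within {0..T})))"

text \<open>Objective J_1(c) = Tr(rho(T) rho_target), expressed through the trajectory.\<close>
definition J1_of :: "real \<Rightarrow> (real \<Rightarrow> mat4) \<Rightarrow> mat4 \<Rightarrow> complex" where
  "J1_of T r rtarget = mtrace (r T ** rtarget)"

definition K_u :: "mat4 \<Rightarrow> mat4 \<Rightarrow> mat4 \<Rightarrow> complex" where
  "K_u V x r = hs_inner x (cscale (-\<i>) (comm V r))"

definition K_n :: "real \<Rightarrow> real \<Rightarrow> real \<Rightarrow> mat4 \<Rightarrow> mat4 \<Rightarrow> mat4 \<Rightarrow> mat4 \<Rightarrow> mat4 \<Rightarrow> complex" where
  "K_n eps L Om W sm sp x r =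
     hs_inner x (cscale (-\<i> * of_real (eps * L)) (comm W r)
       + (eps * Om) *\<^sub>R (2 *\<^sub>R (sm ** r ** sp) + 2 *\<^sub>R (sp ** r ** sm) - 2 *\<^sub>R r))"

text \<open>Euclidean pairing <K^c(x,r), c - c'> in R^3 (components u, n_1, n_2).\<close>
definition K_pair where
  "K_pair eps L1 L2 O1 O2 V x r du dn1 dn2 =
     K_u V x r * of_real du
   + K_n eps L1 O1 W1 sm1 sp1 x r * of_real dn1
   + K_n eps L2 O2 W2 sm2 sp2 x r * of_real dn2"

end

theory Submission imports Defs begin

text \<open>The generator of the adjoint system is minus the Hilbert-Schmidt adjoint of the generator
  \<open>G\<^sub>c\<close> of the master equation at the same control. Hence for a master solution \<open>\<rho>\<close> with
  control \<open>c\<close> and an adjoint solution \<open>\<chi>\<close> with control \<open>c'\<close>,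
  \<open>d/dt \<langle>\<chi>, \<rho>\<rangle> = \<langle>\<chi>, (G\<^sub>c - G\<^sub>c\<^sub>') \<rho>\<rangle>\<close>, which is \<open>\<langle>\<K>\<^sup>c(\<chi>, \<rho>), c - c'\<rangle>\<close> because
  \<open>G\<^sub>c\<close> is affine in \<open>c\<close>. For equal controls \<open>\<langle>\<chi>, \<rho>\<rangle>\<close> is therefore conserved; since
  \<open>J\<^sub>1(c) = \<langle>\<chi>(T), \<rho>(T)\<rangle>\<close> for every adjoint solution \<open>\<chi>\<close> and all trajectories start at
  \<open>\<rho>\<^sub>0\<close>, each identity follows by integrating this derivative.\<close>

lemma matrix_mult_nth: "(A ** B) $ i $ j = (\<Sum>k\<in>UNIV. A $ i $ k * B $ k $ j)"
  by (simp add: matrix_matrix_mult_def)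

lemma adjoint_mat_nth [simp]: "adjoint_mat A $ i $ j = cnj (A $ j $ i)"
  by (simp add: adjoint_mat_def)

lemma cscale_nth [simp]: "cscale c A $ i $ j = c * A $ i $ j"
  by (simp add: cscale_def)

lemma scaleR_mat4_nth [simp]: "(c *\<^sub>R (A::mat4)) $ i $ j = of_real c * A $ i $ j"
  unfolding vector_scaleR_component by (simp add: scaleR_conv_of_real)

declare vector_scaleR_component [simp del]

lemma matrix_mult_scaleR_left [simp]: "(c *\<^sub>R (A::mat4)) ** (B::mat4) = c *\<^sub>R (A ** B)"
  by (simp add: vec_eq_iff matrix_mult_nth sum_distrib_left mult.assoc)

lemma matrix_mult_scaleR_right [simp]: "(A::mat4) ** (c *\<^sub>R (B::mat4)) = c *\<^sub>R (A ** B)"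
  by (simp add: vec_eq_iff matrix_mult_nth sum_distrib_left ac_simps)

lemma matrix_mult_cscale_left [simp]: "cscale c A ** (B::mat4) = cscale c (A ** B)"
  by (simp add: vec_eq_iff matrix_mult_nth sum_distrib_left mult.assoc)

lemma matrix_mult_cscale_right [simp]: "(A::mat4) ** cscale c B = cscale c (A ** B)"
  by (simp add: vec_eq_iff matrix_mult_nth sum_distrib_left ac_simps)

lemma matrix_mult_add_left [simp]: "((A::mat4) + B) ** (C::mat4) = A ** C + B ** C"
  by (simp add: vec_eq_iff matrix_mult_nth sum.distrib distrib_right)

lemma matrix_mult_add_right [simp]: "(A::mat4) ** (B + C) = A ** B + A ** C"
  by (rule matrix_add_ldistrib)

lemma matrix_mult_diff_left [simp]: "((A::mat4) - B) ** (C::mat4) = A ** C - B ** C"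
  by (simp add: vec_eq_iff matrix_mult_nth sum_subtractf left_diff_distrib)

lemma matrix_mult_diff_right [simp]: "(A::mat4) ** (B - C) = A ** B - A ** C"
  by (simp add: vec_eq_iff matrix_mult_nth sum_subtractf right_diff_distrib)

lemma adjoint_mat_add [simp]: "adjoint_mat (A + B) = adjoint_mat A + adjoint_mat B"
  by (simp add: vec_eq_iff)

lemma adjoint_mat_diff [simp]: "adjoint_mat (A - B) = adjoint_mat A - adjoint_mat B"
  by (simp add: vec_eq_iff)

lemma adjoint_mat_scaleR [simp]: "adjoint_mat (c *\<^sub>R A) = c *\<^sub>R adjoint_mat A"
  by (simp add: vec_eq_iff)

lemma adjoint_mat_cscale [simp]: "adjoint_mat (cscale c A) = cscale (cnj c) (adjoint_mat A)"
  by (simp add: vec_eq_iff)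

lemma adjoint_mat_mult [simp]: "adjoint_mat (A ** B) = adjoint_mat B ** adjoint_mat A"
  by (simp add: vec_eq_iff matrix_mult_nth ac_simps)

lemma adjoint_mat_adjoint_mat [simp]: "adjoint_mat (adjoint_mat A) = A"
  by (simp add: vec_eq_iff)

lemma mtrace_add [simp]: "mtrace (A + B) = mtrace A + mtrace B"
  by (simp add: mtrace_def sum.distrib)

lemma mtrace_diff [simp]: "mtrace (A - B) = mtrace A - mtrace B"
  by (simp add: mtrace_def sum_subtractf)

lemma mtrace_scaleR [simp]: "mtrace (c *\<^sub>R A) = of_real c * mtrace A"
  by (simp add: mtrace_def sum_distrib_left)

lemma mtrace_cscale [simp]: "mtrace (cscale c A) = c * mtrace A"
  by (simp add: mtrace_def sum_distrib_left)

lemma mtrace_mult_commute: "mtrace (A ** B) = mtrace (B ** A)"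
  unfolding mtrace_def matrix_mult_nth by (subst sum.swap) (simp add: ac_simps)

lemma hs_inner_add_left [simp]: "hs_inner (A + B) C = hs_inner A C + hs_inner B C"
  by (simp add: hs_inner_def)

lemma hs_inner_add_right [simp]: "hs_inner C (A + B) = hs_inner C A + hs_inner C B"
  by (simp add: hs_inner_def)

lemma hs_inner_diff_left [simp]: "hs_inner (A - B) C = hs_inner A C - hs_inner B C"
  by (simp add: hs_inner_def)

lemma hs_inner_diff_right [simp]: "hs_inner C (A - B) = hs_inner C A - hs_inner C B"
  by (simp add: hs_inner_def)

lemma hs_inner_scaleR_left [simp]: "hs_inner (c *\<^sub>R A) C = of_real c * hs_inner A C"
  by (simp add: hs_inner_def)

lemma hs_inner_scaleR_right [simp]: "hs_inner C (c *\<^sub>R A) = of_real c * hs_inner C A"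
  by (simp add: hs_inner_def)

lemma hs_inner_cscale_left [simp]: "hs_inner (cscale c A) C = cnj c * hs_inner A C"
  by (simp add: hs_inner_def)

lemma hs_inner_cscale_right [simp]: "hs_inner C (cscale c A) = c * hs_inner C A"
  by (simp add: hs_inner_def)

lemma hs_inner_move_left_factor: "hs_inner X (A ** R) = hs_inner (adjoint_mat A ** X) R"
  by (simp add: hs_inner_def matrix_mul_assoc)

lemma hs_inner_move_right_factor: "hs_inner X (R ** A) = hs_inner (X ** adjoint_mat A) R"
  unfolding hs_inner_def adjoint_mat_mult adjoint_mat_adjoint_mat
  by (metis matrix_mul_assoc mtrace_mult_commute)

lemma hs_inner_hermitian_left: "hermitian4 A \<Longrightarrow> hs_inner A B = mtrace (B ** A)"
  unfolding hs_inner_def hermitian4_def by (simp add: mtrace_mult_commute)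

lemma bounded_bilinear_hs_inner: "bounded_bilinear hs_inner"
proof -
  have "bilinear hs_inner"
    unfolding bilinear_def
    by (auto intro!: linearI simp: scaleR_conv_of_real[where 'a=complex])
  then show ?thesis
    by (simp add: bilinear_conv_bounded_bilinear)
qed

lemma kron_index_values:
  "kron_hi 1 = 0" "kron_hi 2 = 1" "kron_hi 3 = 1" "kron_hi 4 = 0"
  "kron_lo 1 = 1" "kron_lo 2 = 0" "kron_lo 3 = 1" "kron_lo 4 = 0"
  by (simp_all add: kron_hi_def kron_lo_def)

lemma sum_UNIV_4: "sum f (UNIV::4 set) = f 1 + f 2 + f 3 + f 4"
  unfolding UNIV_4 by (simp add: ac_simps)

lemma adjoint_mat_spin_operators [simp]:
  "adjoint_mat sp1 = sm1" "adjoint_mat sm1 = sp1"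
  "adjoint_mat sp2 = sm2" "adjoint_mat sm2 = sp2"
  "adjoint_mat W1 = W1" "adjoint_mat W2 = W2"
  unfolding sp1_def sm1_def sp2_def sm2_def W1_def W2_def
  by (simp_all add: vec_eq_iff forall_4 kron_def kron_index_values id2_def mat_def
      sigma_plus_def sigma_minus_def sigma_z_def)

text \<open>\<open>\<sigma>\<^sup>-\<sigma>\<^sup>+ + \<sigma>\<^sup>+\<sigma>\<^sup>- = \<one>\<close>: this is what turns the \<open>n\<^sub>j\<close>-coefficient of the dissipator
  into the term \<open>2\<sigma>\<^sub>j\<^sup>-\<rho>\<sigma>\<^sub>j\<^sup>+ + 2\<sigma>\<^sub>j\<^sup>+\<rho>\<sigma>\<^sub>j\<^sup>- - 2\<rho>\<close> of the switching function.\<close>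

lemma sm1_mult_sp1: "sm1 ** sp1 = mat 1 - sp1 ** sm1"
  unfolding sp1_def sm1_def
  by (simp add: vec_eq_iff forall_4 kron_def kron_index_values id2_def mat_def matrix_mult_nth
      sum_UNIV_4 sigma_plus_def sigma_minus_def)

lemma sm2_mult_sp2: "sm2 ** sp2 = mat 1 - sp2 ** sm2"
  unfolding sp2_def sm2_def
  by (simp add: vec_eq_iff forall_4 kron_def kron_index_values id2_def mat_def matrix_mult_nth
      sum_UNIV_4 sigma_plus_def sigma_minus_def)

lemma hs_inner_adjoint_rhs:
  assumes "hermitian4 V"
  shows "hs_inner (adjoint_rhs eps w1 w2 L1 L2 O1 O2 V u n1 n2 X) R
       = - hs_inner X (master_rhs eps w1 w2 L1 L2 O1 O2 V u n1 n2 R)"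
proof -
  have [simp]: "adjoint_mat V = V"
    using assms by (simp add: hermitian4_def)
  note left = hs_inner_move_left_factor and right = hs_inner_move_right_factor
  show ?thesis
    unfolding adjoint_rhs_def master_rhs_def LD_def LD_adj_def Ham_def comm_def acomm_def
    by (simp add: matrix_mul_assoc
        left[of _ V] left[of _ W1] left[of _ W2] left[of _ sp1] left[of _ sm1]
        left[of _ sp2] left[of _ sm2] left[of _ "sp1 ** sm1"] left[of _ "sm1 ** sp1"]
        left[of _ "sp2 ** sm2"] left[of _ "sm2 ** sp2"]
        right[of _ _ V] right[of _ _ W1] right[of _ _ W2] right[of _ _ sp1] right[of _ _ sm1]
        right[of _ _ sp2] right[of _ _ sm2] right[of _ _ "sp1 ** sm1"] right[of _ _ "sm1 ** sp1"]
        right[of _ _ "sp2 ** sm2"] right[of _ _ "sm2 ** sp2"])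
qed

lemma hs_inner_times_2 [simp]: "hs_inner X ((R::mat4) * 2) = 2 * hs_inner X R"
proof -
  have "R * 2 = (2::real) *\<^sub>R R"
    by (simp add: vec_eq_iff)
  then show ?thesis
    by simp
qed

lemma hs_inner_master_rhs_diff:
  "hs_inner X (master_rhs eps w1 w2 L1 L2 O1 O2 V u n1 n2 R)
     - hs_inner X (master_rhs eps w1 w2 L1 L2 O1 O2 V u' n1' n2' R)
   = K_pair eps L1 L2 O1 O2 V X R (u - u') (n1 - n1') (n2 - n2')"
  unfolding master_rhs_def LD_def Ham_def comm_def acomm_def K_pair_def K_u_def K_n_def
  by (simp add: sm1_mult_sp1 sm2_mult_sp2 matrix_mul_assoc algebra_simps)

lemma K_pair_uminus:
  "K_pair eps L1 L2 O1 O2 V X R (- du) (- dn1) (- dn2)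
     = - K_pair eps L1 L2 O1 O2 V X R du dn1 dn2"
  by (simp add: K_pair_def algebra_simps)

lemma hs_inner_solutions_has_integral:
  assumes "hermitian4 V" "T \<ge> 0"
    and rho: "master_solution eps w1 w2 L1 L2 O1 O2 V T u n1 n2 r0 R"
    and chi: "adjoint_solution eps w1 w2 L1 L2 O1 O2 V T u' n1' n2' rt X"
  shows "((\<lambda>t. K_pair eps L1 L2 O1 O2 V (X t) (R t) (u t - u' t) (n1 t - n1' t) (n2 t - n2' t))
     has_integral (hs_inner (X T) (R T) - hs_inner (X 0) (R 0))) {0..T}"
proof -
  let ?F = "\<lambda>t. master_rhs eps w1 w2 L1 L2 O1 O2 V (u t) (n1 t) (n2 t) (R t)"
  let ?G = "\<lambda>t. adjoint_rhs eps w1 w2 L1 L2 O1 O2 V (u' t) (n1' t) (n2' t) (X t)"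
  obtain S1 where "finite S1"
    and dR: "\<And>t. t \<in> {0..T} - S1 \<Longrightarrow> (R has_vector_derivative ?F t) (at t within {0..T})"
    using rho unfolding master_solution_def by blast
  obtain S2 where "finite S2"
    and dX: "\<And>t. t \<in> {0..T} - S2 \<Longrightarrow> (X has_vector_derivative ?G t) (at t within {0..T})"
    using chi unfolding adjoint_solution_def by blast
  have "continuous_on {0..T} R" "continuous_on {0..T} X"
    using rho chi unfolding master_solution_def adjoint_solution_def by blast+
  show ?thesis
  proof (rule fundamental_theorem_of_calculus_interior_strong[where S = "S1 \<union> S2"])
    show "finite (S1 \<union> S2)"
      using \<open>finite S1\<close> \<open>finite S2\<close> by simp
    show "continuous_on {0..T} (\<lambda>t. hs_inner (X t) (R t))"
      using bounded_bilinear.continuous_on[OF bounded_bilinear_hs_inner]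
        \<open>continuous_on {0..T} X\<close> \<open>continuous_on {0..T} R\<close> .
  next
    fix t
    assume t: "t \<in> {0<..<T} - (S1 \<union> S2)"
    then have at_t: "at t within {0..T} = at t"
      by (intro at_within_interior) auto
    have "((\<lambda>t. hs_inner (X t) (R t)) has_vector_derivative
            hs_inner (X t) (?F t) + hs_inner (?G t) (R t)) (at t)"
      using bounded_bilinear.has_vector_derivative[OF bounded_bilinear_hs_inner]
        dX[of t, unfolded at_t] dR[of t, unfolded at_t] t by auto
    moreover have "hs_inner (X t) (?F t) + hs_inner (?G t) (R t)
        = K_pair eps L1 L2 O1 O2 V (X t) (R t) (u t - u' t) (n1 t - n1' t) (n2 t - n2' t)"
      using hs_inner_master_rhs_diff[of "X t" eps w1 w2 L1 L2 O1 O2 V "u t" "n1 t" "n2 t" "R t"]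
      by (simp only: hs_inner_adjoint_rhs[OF \<open>hermitian4 V\<close>] diff_conv_add_uminus)
    ultimately show "((\<lambda>t. hs_inner (X t) (R t)) has_vector_derivative
        K_pair eps L1 L2 O1 O2 V (X t) (R t) (u t - u' t) (n1 t - n1' t) (n2 t - n2' t)) (at t)"
      by simp
  qed (use \<open>T \<ge> 0\<close> in simp)
qed

lemma hs_inner_solutions_conserved:
  assumes "hermitian4 V" "T \<ge> 0"
    and "master_solution eps w1 w2 L1 L2 O1 O2 V T u n1 n2 r0 R"
    and "adjoint_solution eps w1 w2 L1 L2 O1 O2 V T u n1 n2 rt X"
  shows "hs_inner (X T) (R T) = hs_inner (X 0) (R 0)"
proof -
  have "((\<lambda>t. 0) has_integral (hs_inner (X T) (R T) - hs_inner (X 0) (R 0))) {0..T}"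
    using hs_inner_solutions_has_integral[OF assms] by (simp add: K_pair_def)
  then show ?thesis
    using has_integral_unique[OF _ has_integral_0] by fastforce
qed

lemma J1_difference_has_integral:
  assumes "hermitian4 V" "T \<ge> 0" "hermitian4 rtarget"
    and rho: "master_solution eps w1 w2 L1 L2 O1 O2 V T u n1 n2 r0 r"
    and rho': "master_solution eps w1 w2 L1 L2 O1 O2 V T u' n1' n2' r0 r'"
    and chi': "adjoint_solution eps w1 w2 L1 L2 O1 O2 V T u' n1' n2' rtarget x'"
  shows "((\<lambda>t. K_pair eps L1 L2 O1 O2 V (x' t) (r t) (u t - u' t) (n1 t - n1' t) (n2 t - n2' t))
     has_integral (J1_of T r rtarget - J1_of T r' rtarget)) {0..T}"
proof -
  have "x' T = rtarget" "r 0 = r0" "r' 0 = r0"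
    using rho rho' chi' by (auto simp: master_solution_def adjoint_solution_def)
  then have "J1_of T r rtarget - J1_of T r' rtarget
      = hs_inner (x' T) (r T) - hs_inner (x' T) (r' T)"
    using \<open>hermitian4 rtarget\<close> by (simp add: J1_of_def hs_inner_hermitian_left)
  also have "\<dots> = hs_inner (x' T) (r T) - hs_inner (x' 0) (r 0)"
    using hs_inner_solutions_conserved[OF assms(1,2) rho' chi'] \<open>r 0 = r0\<close> \<open>r' 0 = r0\<close> by simp
  finally show ?thesis
    using hs_inner_solutions_has_integral[OF assms(1,2) rho chi'] by simp
qed

theorem mainTheorem1:
  fixes eps w1 w2 L1 L2 O1 O2 T mu nmax :: real
    and V r0 rtarget :: mat4
    and u n1 n2 uk n1k n2k :: "real \<Rightarrow> real"
    and r rk x xk :: "real \<Rightarrow> mat4"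
  assumes "eps > 0" "w1 > 0" "w2 > 0" "L1 > 0" "L2 > 0" "O1 > 0" "O2 > 0"
    and "hermitian4 V"
    and "T > 0" "mu > 0" "nmax > 0"
    and "density4 r0" "density4 rtarget"
    and "admissible T mu nmax uk n1k n2k"
    and "admissible T mu nmax u n1 n2"
    and "master_solution eps w1 w2 L1 L2 O1 O2 V T uk n1k n2k r0 rk"
    and "master_solution eps w1 w2 L1 L2 O1 O2 V T u n1 n2 r0 r"
    and "adjoint_solution eps w1 w2 L1 L2 O1 O2 V T uk n1k n2k rtarget xk"
    and "adjoint_solution eps w1 w2 L1 L2 O1 O2 V T u n1 n2 rtarget x"
  shows "((\<lambda>t. K_pair eps L1 L2 O1 O2 V (xk t) (r t)
                 (u t - uk t) (n1 t - n1k t) (n2 t - n2k t))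
            has_integral (J1_of T r rtarget - J1_of T rk rtarget)) {0..T}
       \<and> ((\<lambda>t. K_pair eps L1 L2 O1 O2 V (x t) (rk t)
                 (u t - uk t) (n1 t - n1k t) (n2 t - n2k t))
            has_integral (J1_of T r rtarget - J1_of T rk rtarget)) {0..T}"
proof
  have basics: "hermitian4 V" "T \<ge> 0" "hermitian4 rtarget"
    using assms(8,9,13) by (auto simp: density4_def)
  show "((\<lambda>t. K_pair eps L1 L2 O1 O2 V (xk t) (r t)
                 (u t - uk t) (n1 t - n1k t) (n2 t - n2k t))
            has_integral (J1_of T r rtarget - J1_of T rk rtarget)) {0..T}"
    using J1_difference_has_integral[OF basics assms(17,16,18)] .
  have "((\<lambda>t. - K_pair eps L1 L2 O1 O2 V (x t) (rk t)
                 (uk t - u t) (n1k t - n1 t) (n2k t - n2 t))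
            has_integral - (J1_of T rk rtarget - J1_of T r rtarget)) {0..T}"
    using has_integral_neg[OF J1_difference_has_integral[OF basics assms(16,17,19)]] .
  then show "((\<lambda>t. K_pair eps L1 L2 O1 O2 V (x t) (rk t)
                 (u t - uk t) (n1 t - n1k t) (n2 t - n2k t))
            has_integral (J1_of T r rtarget - J1_of T rk rtarget)) {0..T}"
    by (simp add: K_pair_uminus[symmetric])
qed

end
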